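(* Let $K$ be an algebraically closed field of characteristic $2$, let $B\in K[x_1,x_2,x_3]$ be a homogeneous polynomial of degree $4$, and let $$\mathcal{C}_B=\{x\in\mathbb{P}^2_K \mid \nabla B(x)=0\}=\{B_1=B_2=B_3=0\}$$ be its critical locus, where $B_i=\partial B/\partial x_i$. If $\mathcal{C}_B$ is finite, then it consists of at most $7$ points. Moreover, for a general $B$ (i.e. for $B$ in a nonempty Zariski open subset of the space of quartic forms), $\mathcal{C}_B$ consists of exactly $7$ reduced points. *)

theory Defs
  imports "HOL-Computational_Algebra.Polynomial"
begin

text \<open>Points of K^3 are triples. A homogeneous form of degree d in x1,x2,x3 is
  represented by its coefficient function on exponent triples (a,b,c),
  supported on the monomials of total degree d.\<close>

type_synonym 'a coeffs = "nat \<times> nat \<times> nat \<Rightarrow> 'a"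

definition monomials :: "nat \<Rightarrow> (nat \<times> nat \<times> nat) set" where
  "monomials d = {(a,b,c). a \<le> d \<and> b \<le> d \<and> c \<le> d \<and> a + b + c = d}"

definition homog_form :: "nat \<Rightarrow> 'a::zero coeffs \<Rightarrow> bool" where
  "homog_form d B \<longleftrightarrow> (\<forall>m. m \<notin> monomials d \<longrightarrow> B m = 0)"

definition eval_form :: "nat \<Rightarrow> 'a::comm_ring_1 coeffs \<Rightarrow> 'a \<times> 'a \<times> 'a \<Rightarrow> 'a" where
  "eval_form d B p = (case p of (x,y,z) \<Rightarrow>
     (\<Sum>(a,b,c)\<in>monomials d. B (a,b,c) * x ^ a * y ^ b * z ^ c))"

definition pderiv3 :: "nat \<Rightarrow> 'a::comm_ring_1 coeffs \<Rightarrow> 'a coeffs" where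
  "pderiv3 i B = (\<lambda>(a,b,c).
     if i = 0 then of_nat (Suc a) * B (Suc a, b, c)
     else if i = 1 then of_nat (Suc b) * B (a, Suc b, c)
     else of_nat (Suc c) * B (a, b, Suc c))"

definition coord :: "nat \<Rightarrow> 'a \<times> 'a \<times> 'a \<Rightarrow> 'a" where
  "coord i p = (case p of (x,y,z) \<Rightarrow> if i = 0 then x else if i = 1 then y else z)"

definition smult3 :: "'a::times \<Rightarrow> 'a \<times> 'a \<times> 'a \<Rightarrow> 'a \<times> 'a \<times> 'a" where
  "smult3 t p = (case p of (x,y,z) \<Rightarrow> (t * x, t * y, t * z))"

definition proj_point :: "'a::field \<times> 'a \<times> 'a \<Rightarrow> ('a \<times> 'a \<times> 'a) set" where
  "proj_point v = {smult3 t v | t. t \<noteq> 0}"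

text \<open>Affine cone over the critical locus: nonzero common zeros of B_1, B_2, B_3
  (here B is a quartic, so the B_i are cubic forms).\<close>
definition crit_cone :: "'a::field coeffs \<Rightarrow> ('a \<times> 'a \<times> 'a) set" where
  "crit_cone B = {v. v \<noteq> (0,0,0) \<and> (\<forall>i<3. eval_form 3 (pderiv3 i B) v = 0)}"

definition crit_locus :: "'a::field coeffs \<Rightarrow> ('a \<times> 'a \<times> 'a) set set" where
  "crit_locus B = proj_point ` crit_cone B"

text \<open>Reducedness of the point [v] of the scheme {B_1 = B_2 = B_3 = 0}: its Zariski tangent
  space is zero, i.e. the kernel of the Jacobian matrix (B_ij(v)) of (B_1,B_2,B_3) at v
  is exactly the line spanned by v (the affine cone direction).\<close>
definition reduced_crit_point :: "'a::field coeffs \<Rightarrow> 'a \<times> 'a \<times> 'a \<Rightarrow> bool" where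
  "reduced_crit_point B v \<longleftrightarrow>
     {w. \<forall>i<3. (\<Sum>j<3. eval_form 2 (pderiv3 j (pderiv3 i B)) v * coord j w) = 0}
       = {smult3 t v | t. True}"

text \<open>Polynomial functions on the space of quartic forms (coordinates: the 15 coefficients).
  A nonempty Zariski open set contains a nonempty basic open set {P \<noteq> 0}.\<close>
inductive_set quartic_poly_funs :: "('a::comm_ring_1 coeffs \<Rightarrow> 'a) set" where
  const: "(\<lambda>B. c) \<in> quartic_poly_funs"
| var: "m \<in> monomials 4 \<Longrightarrow> (\<lambda>B. B m) \<in> quartic_poly_funs"
| add: "P \<in> quartic_poly_funs \<Longrightarrow> Q \<in> quartic_poly_funs \<Longrightarrow> (\<lambda>B. P B + Q B) \<in> quartic_poly_funs"
| mult: "P \<in> quartic_poly_funs \<Longrightarrow> Q \<in> quartic_poly_funs \<Longrightarrow> (\<lambda>B. P B * Q B) \<in> quartic_poly_funs"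

end

(* In characteristic 2 the gradient of a quartic form B at v is the cross product of v with
   M v^[2], where v^[2] is the coordinatewise square of v and M = quartic_matrix B.  The
   critical points are therefore the eigenvectors of F v = M v^[2], a map that is additive and
   satisfies F (t v) = t^2 F v.  Rescaling turns an eigenvector with nonzero eigenvalue into a
   fixed point of F; the fixed points form a vector space over the prime field F_2 of dimension
   at most 3, so they give at most 7 projective points.  The kernel of F adds at most one point
   when the locus is finite, and nothing when the fixed points span K^3 (then M is invertible).
   For general B the substitution w = (det M) u turns F u = u into w^[2] = adj M w; eliminating
   z and y reduces this system to an additive polynomial of degree 8 in x whose derivative is a
   nonzero constant, so there are exactly 8 fixed points and 7 critical points.  The Hessian of
   B at v is the map w |-> cross product of w with M v^[2], whose kernel is the line through v
   when M is invertible; hence these points are reduced. *)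
theory Submission
  imports Defs "HOL-Library.Product_Plus"
begin

section \<open>Characteristic 2\<close>

lemma char2_numeral_Bit0:
  "CHAR('a::comm_ring_1) = 2 \<Longrightarrow> (numeral (num.Bit0 n) :: 'a) = 0"
  by (metis mult_2 mult_zero_left numeral_Bit0 of_nat_CHAR of_nat_numeral)

lemma char2_numeral_Bit1:
  "CHAR('a::comm_ring_1) = 2 \<Longrightarrow> (numeral (num.Bit1 n) :: 'a) = 1"
  by (metis char2_numeral_Bit0 numeral_Bit0 numeral_Bit1 add_0)

lemmas char2_simps = char2_numeral_Bit0 char2_numeral_Bit1 minus_CHAR_2 uminus_CHAR_2

lemma char2_add_eq_0_iff: "CHAR('a::comm_ring_1) = 2 \<Longrightarrow> (a::'a) + b = 0 \<longleftrightarrow> a = b"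
  by (metis add_eq_0_iff2 uminus_CHAR_2)

lemma eq_square_imp_0_or_1: "(c::'a::field) = c\<^sup>2 \<Longrightarrow> c = 0 \<or> c = 1"
  by (metis power2_eq_square mult_cancel_right1 mult_zero_left)

section \<open>Vectors and matrices of size 3\<close>

type_synonym 'a vec3 = "'a \<times> 'a \<times> 'a"

type_synonym 'a mat3 = "'a vec3 \<times> 'a vec3 \<times> 'a vec3"

lemma mat3_induct: "(\<And>a b c d e f g h i. P ((a,b,c),(d,e,f),(g,h,i))) \<Longrightarrow> P (M :: 'a mat3)"
  by (cases M rule: prod_cases3) (metis prod_cases3)

definition sq3 :: "'a::comm_ring_1 vec3 \<Rightarrow> 'a vec3" where
  "sq3 v = (case v of (x,y,z) \<Rightarrow> (x\<^sup>2, y\<^sup>2, z\<^sup>2))"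

definition cross3 :: "'a::comm_ring_1 vec3 \<Rightarrow> 'a vec3 \<Rightarrow> 'a vec3" where
  "cross3 v w = (case v of (x,y,z) \<Rightarrow> case w of (u,p,q) \<Rightarrow> (y*q - z*p, z*u - x*q, x*p - y*u))"

definition det3 :: "'a::comm_ring_1 vec3 \<Rightarrow> 'a vec3 \<Rightarrow> 'a vec3 \<Rightarrow> 'a" where
  "det3 u v w = (case u of (a,b,c) \<Rightarrow> case cross3 v w of (p,q,r) \<Rightarrow> a*p + b*q + c*r)"

definition mat_vec3 :: "'a::comm_ring_1 mat3 \<Rightarrow> 'a vec3 \<Rightarrow> 'a vec3" where
  "mat_vec3 M v = (case M of ((a,b,c),(d,e,f),(g,h,i)) \<Rightarrow> case v of (x,y,z) \<Rightarrow>
      (a*x + b*y + c*z, d*x + e*y + f*z, g*x + h*y + i*z))"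

definition mat_det3 :: "'a::comm_ring_1 mat3 \<Rightarrow> 'a" where
  "mat_det3 M = (case M of (r1,r2,r3) \<Rightarrow> det3 r1 r2 r3)"

definition adj3 :: "'a::comm_ring_1 mat3 \<Rightarrow> 'a mat3" where
  "adj3 M = (case M of ((a,b,c),(d,e,f),(g,h,i)) \<Rightarrow>
     ((e*i - f*h, c*h - b*i, b*f - c*e), (f*g - d*i, a*i - c*g, c*d - a*f),
      (d*h - e*g, b*g - a*h, a*e - b*d)))"

lemmas vec3_defs = sq3_def cross3_def det3_def mat_vec3_def mat_det3_def adj3_def smult3_def

lemma smult3_smult3: "smult3 a (smult3 b v) = smult3 (a*b) (v::'a::comm_ring_1 vec3)"
  by (induct v rule: prod_induct3) (simp add: smult3_def mult.assoc)

lemma smult3_add: "smult3 a (u + v) = smult3 a u + smult3 a (v::'a::comm_ring_1 vec3)"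
  by (induct u rule: prod_induct3, induct v rule: prod_induct3) (simp add: smult3_def distrib_left)

lemma smult3_one [simp]: "smult3 1 v = (v::'a::comm_ring_1 vec3)"
  and smult3_zero [simp]: "smult3 0 v = (0,0,0)"
  and smult3_zero_right [simp]: "smult3 a (0,0,0) = (0,0,(0::'a))"
  by (induct v rule: prod_induct3) (simp_all add: smult3_def)

lemma vec3_add_zero [simp]: "v + (0,0,0) = v" "(0,0,0) + v = (v::'a::comm_ring_1 vec3)"
  by (induct v rule: prod_induct3, simp)+

lemma smult3_eq_0_iff [simp]:
  "smult3 a v = (0,0,0) \<longleftrightarrow> a = 0 \<or> v = (0,0,(0::'a::field))"
  by (induct v rule: prod_induct3) (auto simp: smult3_def)

lemma smult3_eq_smult3_iff: "smult3 a v = smult3 a w \<longleftrightarrow> a = 0 \<or> v = (w::'a::field vec3)"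
  by (induct v rule: prod_induct3, induct w rule: prod_induct3) (auto simp: smult3_def)

lemma smult3_cancel:
  fixes v :: "'a::field vec3"
  assumes "smult3 a v = smult3 b v" "v \<noteq> (0,0,0)"
  shows "a = b"
  using assms by (induct v rule: prod_induct3) (auto simp: smult3_def)

lemma sq3_smult: "sq3 (smult3 t v) = smult3 (t\<^sup>2) (sq3 (v::'a::comm_ring_1 vec3))"
  by (induct v rule: prod_induct3) (simp add: sq3_def smult3_def power_mult_distrib)

lemma cross3_smult_left: "cross3 (smult3 t v) w = smult3 t (cross3 v (w::'a::comm_ring_1 vec3))"
  and cross3_smult_right: "cross3 v (smult3 t w) = smult3 t (cross3 v w)"
  by (induct v rule: prod_induct3, induct w rule: prod_induct3, simp add: vec3_defs algebra_simps)+

lemma cross3_self [simp]: "cross3 v v = (0,0,(0::'a::comm_ring_1))"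
  by (induct v rule: prod_induct3) (simp add: cross3_def mult.commute)

lemma cross3_zero_right [simp]: "cross3 v (0,0,0) = (0,0,(0::'a::comm_ring_1))"
  and cross3_zero_left [simp]: "cross3 (0,0,0) v = (0,0,0)"
  by (induct v rule: prod_induct3, simp add: cross3_def)+

lemma cross3_add_smult_left: "cross3 (a + smult3 t b) b = cross3 a (b::'a::comm_ring_1 vec3)"
  and cross3_add_smult_right: "cross3 a (a + smult3 t b) = smult3 t (cross3 a b)"
  by (induct a rule: prod_induct3, induct b rule: prod_induct3, simp add: vec3_defs algebra_simps)+

lemma cross3_eq_0_commute: "cross3 v w = (0,0,0) \<longleftrightarrow> cross3 w v = (0,0,(0::'a::comm_ring_1))"
  by (induct v rule: prod_induct3, induct w rule: prod_induct3) (auto simp: cross3_def algebra_simps)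

lemma cross3_eq_0_imp_parallel:
  fixes v w :: "'a::field vec3"
  assumes "v \<noteq> (0,0,0)" "cross3 v w = (0,0,0)"
  shows "\<exists>c. w = smult3 c v"
proof -
  obtain x y z where v: "v = (x,y,z)" by (cases v rule: prod_cases3)
  obtain u p q where w: "w = (u,p,q)" by (cases w rule: prod_cases3)
  have e: "y*q = z*p" "z*u = x*q" "x*p = y*u" using assms(2) unfolding v w cross3_def by auto
  consider "x \<noteq> 0" | "y \<noteq> 0" | "z \<noteq> 0" using assms(1) v by auto
  then show ?thesis
  proof cases
    case 1
    with e have "w = smult3 (u/x) v" by (auto simp: v w smult3_def field_simps)
    then show ?thesis by blast
  next
    case 2
    with e have "w = smult3 (p/y) v" by (auto simp: v w smult3_def field_simps)
    then show ?thesis by blast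
  next
    case 3
    with e have "w = smult3 (q/z) v" by (auto simp: v w smult3_def field_simps)
    then show ?thesis by blast
  qed
qed

lemma mat_vec3_zero [simp]: "mat_vec3 M (0,0,0) = (0,0,(0::'a::comm_ring_1))"
  by (induct M rule: mat3_induct) (simp add: mat_vec3_def)

lemma mat_vec3_smult: "mat_vec3 M (smult3 t v) = smult3 t (mat_vec3 M (v::'a::comm_ring_1 vec3))"
  by (induct M rule: mat3_induct, induct v rule: prod_induct3) (simp add: vec3_defs algebra_simps)

lemma adj3_mat_vec3: "mat_vec3 (adj3 M) (mat_vec3 M v) = smult3 (mat_det3 M) (v::'a::comm_ring_1 vec3)"
  and mat_vec3_adj3: "mat_vec3 M (mat_vec3 (adj3 M) v) = smult3 (mat_det3 M) v"
  by (induct M rule: mat3_induct, induct v rule: prod_induct3, simp add: vec3_defs algebra_simps)+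

lemma det3_mat_vec3:
  "det3 (mat_vec3 M a) (mat_vec3 M b) (mat_vec3 M c) = mat_det3 M * det3 a b (c::'a::comm_ring_1 vec3)"
  by (induct M rule: mat3_induct, induct a rule: prod_induct3, induct b rule: prod_induct3,
      induct c rule: prod_induct3) (simp add: vec3_defs algebra_simps)

lemma cramer3:
  "smult3 (det3 a b c) d =
     smult3 (det3 d b c) a + smult3 (det3 a d c) b + smult3 (det3 a b d) (c::'a::comm_ring_1 vec3)"
  by (induct a rule: prod_induct3, induct b rule: prod_induct3, induct c rule: prod_induct3,
      induct d rule: prod_induct3) (simp add: vec3_defs algebra_simps)

lemma det3_coords_unique:
  fixes a b c :: "'a::field vec3"
  assumes "det3 a b c \<noteq> 0"
    and "smult3 p a + smult3 q b + smult3 r c = smult3 p' a + smult3 q' b + smult3 r' c"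
  shows "p = p' \<and> q = q' \<and> r = r'"
proof -
  have "det3 (smult3 p a + smult3 q b + smult3 r c) b c = p * det3 a b c"
    and "det3 a (smult3 p a + smult3 q b + smult3 r c) c = q * det3 a b c"
    and "det3 a b (smult3 p a + smult3 q b + smult3 r c) = r * det3 a b c"
    for p q r
    by (induct a rule: prod_induct3, induct b rule: prod_induct3, induct c rule: prod_induct3,
        simp add: vec3_defs algebra_simps)+
  with assms show ?thesis by (metis mult_right_cancel)
qed

lemma cross3_coords_unique:
  fixes a b :: "'a::field vec3"
  assumes "cross3 a b \<noteq> (0,0,0)" and "smult3 p a + smult3 q b = smult3 p' a + smult3 q' b"
  shows "p = p' \<and> q = q'"
proof -
  have "cross3 (smult3 p a + smult3 q b) b = smult3 p (cross3 a b)"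
    and "cross3 a (smult3 p a + smult3 q b) = smult3 q (cross3 a b)" for p q
    by (induct a rule: prod_induct3, induct b rule: prod_induct3, simp add: vec3_defs algebra_simps)+
  with assms show ?thesis by (metis smult3_cancel)
qed

lemma det3_nonzero_span:
  fixes a b c :: "'a::field vec3"
  assumes "det3 a b c \<noteq> 0"
  shows "\<exists>p q r. d = smult3 p a + smult3 q b + smult3 r c"
proof -
  let ?D = "det3 a b c"
  have "d = smult3 (1/?D) (smult3 ?D d)" using assms by (simp add: smult3_smult3)
  also have "smult3 ?D d = smult3 (det3 d b c) a + smult3 (det3 a d c) b + smult3 (det3 a b d) c"
    by (rule cramer3)
  finally have "d = smult3 (det3 d b c / ?D) a + smult3 (det3 a d c / ?D) b + smult3 (det3 a b d / ?D) c"
    by (simp add: smult3_add smult3_smult3)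
  then show ?thesis by blast
qed

lemma cross3_nonzero_span:
  fixes a b :: "'a::field vec3"
  assumes "cross3 a b \<noteq> (0,0,0)" and "det3 a b d = 0"
  shows "\<exists>p q. d = smult3 p a + smult3 q b"
proof -
  obtain t where t: "det3 a b t \<noteq> 0"
  proof -
    have "det3 a b (1,0,0) = fst (cross3 a b)" "det3 a b (0,1,0) = fst (snd (cross3 a b))"
      "det3 a b (0,0,1) = snd (snd (cross3 a b))"
      by (induct a rule: prod_induct3, induct b rule: prod_induct3, simp add: vec3_defs)+
    with assms(1) that show ?thesis by (metis prod.collapse)
  qed
  let ?D = "det3 a b t"
  have "d = smult3 (1/?D) (smult3 ?D d)" using t by (simp add: smult3_smult3)
  also have "smult3 ?D d = smult3 (det3 d b t) a + smult3 (det3 a d t) b + smult3 (det3 a b d) t"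
    by (rule cramer3)
  finally have "d = smult3 (det3 d b t / ?D) a + smult3 (det3 a d t / ?D) b"
    using assms(2) by (simp add: smult3_add smult3_smult3)
  then show ?thesis by blast
qed

section \<open>The Frobenius-semilinear map \<open>v \<mapsto> M v\<^sup>[2]\<close>\<close>

definition frob3 :: "'a::comm_ring_1 mat3 \<Rightarrow> 'a vec3 \<Rightarrow> 'a vec3" where
  "frob3 M v = mat_vec3 M (sq3 v)"

definition frob_fixed :: "'a::comm_ring_1 mat3 \<Rightarrow> 'a vec3 set" where
  "frob_fixed M = {u. frob3 M u = u}"

definition frob_kernel :: "'a::comm_ring_1 mat3 \<Rightarrow> 'a vec3 set" where
  "frob_kernel M = {v. v \<noteq> (0,0,0) \<and> frob3 M v = (0,0,0)}"

definition frob_eigencone :: "'a::comm_ring_1 mat3 \<Rightarrow> 'a vec3 set" where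
  "frob_eigencone M = {v. v \<noteq> (0,0,0) \<and> cross3 v (frob3 M v) = (0,0,0)}"

lemma frob3_add:
  fixes u v :: "'a::comm_ring_1 vec3"
  assumes "CHAR('a) = 2"
  shows "frob3 M (u + v) = frob3 M u + frob3 M v"
  by (induct M rule: mat3_induct, induct u rule: prod_induct3, induct v rule: prod_induct3)
     (simp add: frob3_def vec3_defs power2_sum char2_simps[OF assms] algebra_simps)

lemma frob3_smult: "frob3 M (smult3 t v) = smult3 (t\<^sup>2) (frob3 M (v::'a::comm_ring_1 vec3))"
  by (induct M rule: mat3_induct, induct v rule: prod_induct3)
     (simp add: frob3_def vec3_defs power_mult_distrib algebra_simps)

lemma frob3_zero [simp]: "frob3 M (0,0,0) = (0,0,(0::'a::comm_ring_1))"
  by (simp add: frob3_def sq3_def)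

lemma zero_in_frob_fixed: "(0,0,0) \<in> frob_fixed M"
  by (simp add: frob_fixed_def)

lemma frob3_combination:
  fixes a b c :: "'a::comm_ring_1 vec3"
  assumes "CHAR('a) = 2" and "a \<in> frob_fixed M" "b \<in> frob_fixed M" "c \<in> frob_fixed M"
  shows "frob3 M (smult3 p a + smult3 q b + smult3 r c)
           = smult3 (p\<^sup>2) a + smult3 (q\<^sup>2) b + smult3 (r\<^sup>2) c"
  using assms by (simp add: frob_fixed_def frob3_add frob3_smult)

lemma frob_fixed_on_line:
  fixes a :: "'a::field vec3"
  assumes "a \<in> frob_fixed M" "a \<noteq> (0,0,0)" "s \<in> frob_fixed M" "cross3 a s = (0,0,0)"
  shows "s \<in> {(0,0,0), a}"
proof -
  obtain p where s: "s = smult3 p a" using cross3_eq_0_imp_parallel assms(2,4) by blast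
  with assms(1,3) have "s = smult3 (p\<^sup>2) a" by (simp add: frob_fixed_def frob3_smult)
  with s assms(2) have "p = p\<^sup>2" by (metis smult3_cancel)
  with s show ?thesis using eq_square_imp_0_or_1 by fastforce
qed

lemma frob_fixed_on_plane:
  fixes a b :: "'a::field vec3"
  assumes char: "CHAR('a) = 2" and fixed: "a \<in> frob_fixed M" "b \<in> frob_fixed M"
    and ab: "cross3 a b \<noteq> (0,0,0)" and s: "s \<in> frob_fixed M" "det3 a b s = 0"
  shows "s \<in> {(0,0,0), a, b, a + b}"
proof -
  obtain p q where s_eq: "s = smult3 p a + smult3 q b" using cross3_nonzero_span ab s(2) by blast
  have "s = frob3 M s" using s(1) by (simp add: frob_fixed_def)
  also have "\<dots> = smult3 (p\<^sup>2) a + smult3 (q\<^sup>2) b"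
    using frob3_combination[OF char fixed zero_in_frob_fixed, of p q 0] s_eq by simp
  finally have "p = p\<^sup>2 \<and> q = q\<^sup>2" using cross3_coords_unique[OF ab] s_eq by metis
  then have "p = 0 \<or> p = 1" "q = 0 \<or> q = 1" using eq_square_imp_0_or_1 by blast+
  with s_eq show ?thesis by auto
qed

lemma frob_fixed_in_basis_span:
  fixes a b c :: "'a::field vec3"
  assumes char: "CHAR('a) = 2" and fixed: "a \<in> frob_fixed M" "b \<in> frob_fixed M" "c \<in> frob_fixed M"
    and abc: "det3 a b c \<noteq> 0" and s: "s \<in> frob_fixed M"
  shows "s \<in> (\<lambda>(p,q,r). smult3 p a + smult3 q b + smult3 r c) ` ({0,1} \<times> {0,1} \<times> {0,1})"
proof -
  obtain p q r where s_eq: "s = smult3 p a + smult3 q b + smult3 r c"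
    using det3_nonzero_span abc by blast
  have "s = frob3 M s" using s by (simp add: frob_fixed_def)
  also have "\<dots> = smult3 (p\<^sup>2) a + smult3 (q\<^sup>2) b + smult3 (r\<^sup>2) c"
    using frob3_combination[OF char fixed] s_eq by simp
  finally have "p = p\<^sup>2 \<and> q = q\<^sup>2 \<and> r = r\<^sup>2" using det3_coords_unique[OF abc] s_eq by metis
  then have "(p,q,r) \<in> {0,1} \<times> {0,1} \<times> {0,1}" using eq_square_imp_0_or_1 by blast
  with s_eq show ?thesis by force
qed

lemma card_frob_fixed_le_8:
  fixes a b c :: "'a::field vec3"
  assumes "CHAR('a) = 2" "a \<in> frob_fixed M" "b \<in> frob_fixed M" "c \<in> frob_fixed M"
    and "det3 a b c \<noteq> 0"
  shows "finite (frob_fixed M) \<and> card (frob_fixed M) \<le> 8"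
proof -
  let ?A = "{0::'a,1} \<times> {0::'a,1} \<times> {0::'a,1}"
  let ?span = "(\<lambda>(p,q,r). smult3 p a + smult3 q b + smult3 r c) ` ?A"
  have sub: "frob_fixed M \<subseteq> ?span" using frob_fixed_in_basis_span[OF assms] by blast
  have "card (frob_fixed M) \<le> card ?span" by (rule card_mono[OF _ sub]) simp
  also have "\<dots> \<le> card ?A" by (rule card_image_le) simp
  finally show ?thesis using finite_subset[OF sub] by (simp add: card_cartesian_product)
qed

lemma card_frob_fixed_le_4:
  fixes M :: "'a::field mat3"
  assumes char: "CHAR('a) = 2"
    and flat: "\<forall>a\<in>frob_fixed M. \<forall>b\<in>frob_fixed M. \<forall>c\<in>frob_fixed M. det3 a b c = 0"
  shows "finite (frob_fixed M) \<and> card (frob_fixed M) \<le> 4"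
proof -
  have "\<exists>a b. frob_fixed M \<subseteq> {(0,0,0), a, b, a + b}"
  proof (cases "frob_fixed M \<subseteq> {(0,0,0)}")
    case True
    then show ?thesis by blast
  next
    case False
    then obtain a where a: "a \<in> frob_fixed M" "a \<noteq> (0,0,0)" by auto
    show ?thesis
    proof (cases "\<exists>b\<in>frob_fixed M. cross3 a b \<noteq> (0,0,0)")
      case True
      then obtain b where "b \<in> frob_fixed M" "cross3 a b \<noteq> (0,0,0)" by blast
      then show ?thesis using frob_fixed_on_plane[OF char a(1)] flat a(1) by blast
    next
      case False
      then have "frob_fixed M \<subseteq> {(0,0,0), a, a, a + a}" using frob_fixed_on_line[OF a] by blast
      then show ?thesis by blast
    qed
  qed
  then obtain a b where sub: "frob_fixed M \<subseteq> {(0,0,0), a, b, a + b}" by blast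
  have fin: "finite {(0,0,0), a, b, a + b}" by simp
  have "card (frob_fixed M) \<le> card {(0,0,0), a, b, a + b}" by (rule card_mono[OF fin sub])
  also have "\<dots> \<le> 4" using card_length[of "[(0,0,0), a, b, a + b]"] by simp
  finally show ?thesis using finite_subset[OF sub fin] by simp
qed

lemma proj_point_smult:
  assumes "(c::'a::field) \<noteq> 0"
  shows "proj_point (smult3 c v) = proj_point v"
proof -
  have "smult3 s v \<in> proj_point (smult3 c v)" if "s \<noteq> 0" for s
    unfolding proj_point_def
    by (rule CollectI, rule exI[of _ "s / c"]) (use that assms in \<open>simp add: smult3_smult3\<close>)
  moreover have "smult3 s (smult3 c v) \<in> proj_point v" if "s \<noteq> 0" for s
    unfolding proj_point_def
    by (rule CollectI, rule exI[of _ "s * c"]) (use that assms in \<open>simp add: smult3_smult3\<close>)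
  ultimately show ?thesis unfolding proj_point_def by blast
qed

lemma proj_point_eqD:
  assumes "proj_point v = proj_point (w::'a::field vec3)"
  shows "\<exists>c. c \<noteq> 0 \<and> w = smult3 c v"
proof -
  have "w \<in> proj_point w" unfolding proj_point_def by (rule CollectI, rule exI[of _ 1]) simp
  with assms show ?thesis unfolding proj_point_def by auto
qed

lemma inj_on_proj_point_frob_fixed:
  "inj_on proj_point (frob_fixed M - {(0,0,(0::'a::field))})"
proof (rule inj_onI)
  fix u u' assume u: "u \<in> frob_fixed M - {(0,0,0)}" and u': "u' \<in> frob_fixed M - {(0,0,0)}"
    and eq: "proj_point u = proj_point u'"
  obtain c where c: "c \<noteq> 0" "u' = smult3 c u" using proj_point_eqD[OF eq] by blast
  with u u' have "smult3 c u = smult3 (c\<^sup>2) u" by (simp add: frob_fixed_def frob3_smult)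
  with u have "c = c\<^sup>2" by (metis smult3_cancel Diff_iff singletonI)
  with c have "c = 1" using eq_square_imp_0_or_1 by blast
  with c show "u = u'" by simp
qed

lemma proj_frob_eigencone_subset:
  fixes M :: "'a::field mat3"
  shows "proj_point ` frob_eigencone M
           \<subseteq> proj_point ` (frob_fixed M - {(0,0,0)}) \<union> proj_point ` frob_kernel M"
proof
  fix P assume "P \<in> proj_point ` frob_eigencone M"
  then obtain v where P: "P = proj_point v" and v: "v \<noteq> (0,0,0)" "cross3 v (frob3 M v) = (0,0,0)"
    by (auto simp: frob_eigencone_def)
  obtain l where l: "frob3 M v = smult3 l v" using cross3_eq_0_imp_parallel[OF v] by blast
  show "P \<in> proj_point ` (frob_fixed M - {(0,0,0)}) \<union> proj_point ` frob_kernel M"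
  proof (cases "l = 0")
    case True
    with v l P show ?thesis by (simp add: frob_kernel_def)
  next
    case False
    let ?u = "smult3 (1/l) v"
    have "frob3 M ?u = ?u" using False by (simp add: frob3_smult l smult3_smult3 power2_eq_square)
    moreover have "P = proj_point ?u" using False P by (simp add: proj_point_smult)
    ultimately show ?thesis using False v by (auto simp: frob_fixed_def)
  qed
qed

lemma frob_kernel_empty:
  fixes M :: "'a::field mat3"
  assumes "mat_det3 M \<noteq> 0"
  shows "frob_kernel M = {}"
proof (rule ccontr)
  assume "frob_kernel M \<noteq> {}"
  then obtain v where v: "v \<noteq> (0,0,0)" "mat_vec3 M (sq3 v) = (0,0,0)"
    by (auto simp: frob_kernel_def frob3_def)
  have "smult3 (mat_det3 M) (sq3 v) = (0,0,0)" using adj3_mat_vec3[of M "sq3 v"] v(2) by simp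
  with assms v(1) show False by (induct v rule: prod_induct3) (simp add: sq3_def)
qed

lemma inj_proj_point_line:
  fixes a b :: "'a::field vec3"
  assumes "cross3 a b \<noteq> (0,0,0)"
  shows "inj (\<lambda>t. proj_point (a + smult3 t b))"
proof (rule injI)
  fix s t assume "proj_point (a + smult3 s b) = proj_point (a + smult3 t b)"
  then obtain c where c: "a + smult3 t b = smult3 c (a + smult3 s b)" using proj_point_eqD by blast
  then have "smult3 1 (cross3 a b) = smult3 c (cross3 a b)"
    by (metis cross3_add_smult_left cross3_smult_left smult3_one)
  then have "c = 1" using smult3_cancel assms by blast
  with c have "smult3 t (cross3 a b) = smult3 s (cross3 a b)" by (metis cross3_add_smult_right smult3_one)
  then show "s = t" using smult3_cancel assms by blast
qed

text \<open>Two non-proportional vectors \<open>a\<close>, \<open>b\<close> in the kernel would put the whole line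
  \<open>a + t b\<close> into the kernel, by additivity, and so infinitely many points into the locus.\<close>

lemma card_proj_frob_kernel_le_1:
  fixes M :: "'a::field mat3"
  assumes char: "CHAR('a) = 2" and inf: "infinite (UNIV :: 'a set)"
    and fin: "finite (proj_point ` frob_eigencone M)"
  shows "finite (proj_point ` frob_kernel M) \<and> card (proj_point ` frob_kernel M) \<le> 1"
proof -
  have kernel_sub: "frob_kernel M \<subseteq> frob_eigencone M"
    by (auto simp: frob_kernel_def frob_eigencone_def)
  have "proj_point a = proj_point b" if ab: "a \<in> frob_kernel M" "b \<in> frob_kernel M" for a b
  proof (rule ccontr)
    assume ne: "proj_point a \<noteq> proj_point b"
    have ab_nz: "a \<noteq> (0,0,0)" "b \<noteq> (0,0,0)"
      and ab_frob: "frob3 M a = (0,0,0)" "frob3 M b = (0,0,0)"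
      using ab by (auto simp: frob_kernel_def)
    have cr: "cross3 a b \<noteq> (0,0,0)"
    proof
      assume "cross3 a b = (0,0,0)"
      then obtain c where "b = smult3 c a" using cross3_eq_0_imp_parallel ab_nz(1) by blast
      with ne ab_nz(2) show False by (metis proj_point_smult smult3_zero)
    qed
    have "a + smult3 t b \<in> frob_kernel M" for t
    proof -
      from cr have "a + smult3 t b \<noteq> (0,0,0)" by (metis cross3_add_smult_left cross3_zero_left)
      with ab_frob show ?thesis by (simp add: frob_kernel_def frob3_add[OF char] frob3_smult)
    qed
    then have "range (\<lambda>t. proj_point (a + smult3 t b)) \<subseteq> proj_point ` frob_eigencone M"
      using kernel_sub by blast
    then have "finite (range (\<lambda>t. proj_point (a + smult3 t b)))" using fin by (rule finite_subset)
    with inf show False using finite_imageD inj_proj_point_line[OF cr] by blast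
  qed
  then have same: "\<forall>P\<in>proj_point ` frob_kernel M. \<forall>Q\<in>proj_point ` frob_kernel M. P = Q" by blast
  have fin_K: "finite (proj_point ` frob_kernel M)"
    using fin kernel_sub by (meson finite_subset image_mono)
  have "card (proj_point ` frob_kernel M) \<le> Suc 0"
    unfolding card_le_Suc0_iff_eq[OF fin_K] by (rule same)
  with fin_K show ?thesis by (simp add: One_nat_def)
qed

lemma card_proj_frob_eigencone_le_7:
  fixes M :: "'a::field mat3"
  assumes char: "CHAR('a) = 2" and inf: "infinite (UNIV :: 'a set)"
    and fin: "finite (proj_point ` frob_eigencone M)"
  shows "card (proj_point ` frob_eigencone M) \<le> 7"
proof -
  let ?S = "frob_fixed M" and ?K = "proj_point ` frob_kernel M"
  have K: "finite ?K \<and> card ?K \<le> 1" by (rule card_proj_frob_kernel_le_1[OF assms])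
  have bound: "card (proj_point ` frob_eigencone M) \<le> (card ?S - 1) + card ?K"
    if "finite ?S"
  proof -
    have "card (proj_point ` frob_eigencone M) \<le> card (proj_point ` (?S - {(0,0,0)}) \<union> ?K)"
      using that K by (intro card_mono[OF _ proj_frob_eigencone_subset]) simp
    also have "\<dots> \<le> card (proj_point ` (?S - {(0,0,0)})) + card ?K" by (rule card_Un_le)
    also have "card (proj_point ` (?S - {(0,0,0)})) \<le> card (?S - {(0,0,0)})"
      using that by (intro card_image_le) auto
    finally show ?thesis by (simp add: card_Diff_singleton[OF zero_in_frob_fixed])
  qed
  show ?thesis
  proof (cases "\<exists>a\<in>?S. \<exists>b\<in>?S. \<exists>c\<in>?S. det3 a b c \<noteq> 0")
    case True
    then obtain a b c where abc: "a \<in> ?S" "b \<in> ?S" "c \<in> ?S" "det3 a b c \<noteq> 0" by blast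
    have "det3 a b c = det3 (frob3 M a) (frob3 M b) (frob3 M c)"
      using abc by (simp add: frob_fixed_def)
    also have "\<dots> = mat_det3 M * det3 (sq3 a) (sq3 b) (sq3 c)"
      by (simp add: frob3_def det3_mat_vec3)
    finally have "mat_det3 M \<noteq> 0" using abc(4) by auto
    then have "?K = {}" by (simp add: frob_kernel_empty)
    with bound card_frob_fixed_le_8[OF char abc] show ?thesis by fastforce
  next
    case False
    with bound card_frob_fixed_le_4[OF char] K show ?thesis by fastforce
  qed
qed

lemma frob_fixed_eq_scaled_square_system:
  fixes M :: "'a::field mat3"
  assumes d: "mat_det3 M \<noteq> 0"
  shows "frob_fixed M = smult3 (1 / mat_det3 M) ` {w. sq3 w = mat_vec3 (adj3 M) w}"
proof -
  let ?d = "mat_det3 M" and ?Sol = "{w. sq3 w = mat_vec3 (adj3 M) w}"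
  have fixed_iff: "u \<in> frob_fixed M \<longleftrightarrow> smult3 ?d u \<in> ?Sol" for u
  proof -
    have "u \<in> frob_fixed M \<longleftrightarrow> smult3 ?d (sq3 u) = mat_vec3 (adj3 M) u"
    proof
      assume "u \<in> frob_fixed M"
      then have "mat_vec3 M (sq3 u) = u" by (simp add: frob_fixed_def frob3_def)
      then show "smult3 ?d (sq3 u) = mat_vec3 (adj3 M) u" using adj3_mat_vec3[of M "sq3 u"] by simp
    next
      assume "smult3 ?d (sq3 u) = mat_vec3 (adj3 M) u"
      then have "smult3 ?d (mat_vec3 M (sq3 u)) = smult3 ?d u"
        using mat_vec3_adj3[of M u] mat_vec3_smult[of M ?d "sq3 u"] by simp
      with d show "u \<in> frob_fixed M" by (simp add: frob_fixed_def frob3_def smult3_eq_smult3_iff)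
    qed
    also have "\<dots> \<longleftrightarrow> smult3 ?d u \<in> ?Sol"
      using d by (simp add: sq3_smult mat_vec3_smult power2_eq_square smult3_eq_smult3_iff
          flip: smult3_smult3)
    finally show ?thesis .
  qed
  show ?thesis
  proof (intro set_eqI iffI)
    fix u assume "u \<in> frob_fixed M"
    moreover have "u = smult3 (1 / ?d) (smult3 ?d u)" using d by (simp add: smult3_smult3)
    ultimately show "u \<in> smult3 (1 / ?d) ` ?Sol" using fixed_iff by blast
  next
    fix u assume "u \<in> smult3 (1 / ?d) ` ?Sol"
    then obtain w where "w \<in> ?Sol" "u = smult3 (1 / ?d) w" by blast
    with d show "u \<in> frob_fixed M" using fixed_iff by (simp add: smult3_smult3)
  qed
qed

lemma frob_eigencone_tangent_space:
  fixes M :: "'a::field mat3"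
  assumes d: "mat_det3 M \<noteq> 0" and v: "v \<in> frob_eigencone M"
  shows "{w. cross3 w (frob3 M v) = (0,0,0)} = {smult3 t v | t. True}"
proof -
  have v_nz: "v \<noteq> (0,0,0)" and "cross3 v (frob3 M v) = (0,0,0)"
    using v by (auto simp: frob_eigencone_def)
  then obtain l where l: "frob3 M v = smult3 l v" using cross3_eq_0_imp_parallel by blast
  have "l \<noteq> 0"
  proof
    assume "l = 0"
    with l v_nz have "v \<in> frob_kernel M" by (simp add: frob_kernel_def)
    with frob_kernel_empty[OF d] show False by simp
  qed
  have "cross3 w (frob3 M v) = (0,0,0) \<longleftrightarrow> (\<exists>t. w = smult3 t v)" for w
  proof -
    have "cross3 w (frob3 M v) = (0,0,0) \<longleftrightarrow> cross3 v w = (0,0,0)"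
      using \<open>l \<noteq> 0\<close> by (simp add: l cross3_smult_right cross3_eq_0_commute)
    also have "\<dots> \<longleftrightarrow> (\<exists>t. w = smult3 t v)"
      using cross3_eq_0_imp_parallel[OF v_nz, of w] by (auto simp: cross3_smult_right)
    finally show ?thesis .
  qed
  then show ?thesis by auto
qed

section \<open>Polynomials over algebraically closed fields\<close>

lemma card_roots_rsquarefree:
  fixes p :: "'a::alg_closed_field poly"
  assumes "p \<noteq> 0" "\<forall>x. poly p x = 0 \<longrightarrow> poly (pderiv p) x \<noteq> 0"
  shows "card {x. poly p x = 0} = degree p"
  using assms
proof (induction "degree p" arbitrary: p rule: less_induct)
  case (less p)
  show ?case
  proof (cases "degree p = 0")
    case True
    with less.prems show ?thesis by (auto elim!: degree_eq_zeroE)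
  next
    case False
    then obtain r where r: "poly p r = 0" using alg_closed_imp_poly_has_root by blast
    then obtain q where pq: "p = [:-r, 1:] * q" using poly_eq_0_iff_dvd by (metis dvdE)
    have q0: "q \<noteq> 0" using less.prems pq by auto
    have deg: "degree p = Suc (degree q)" unfolding pq using q0 by (subst degree_mult_eq) auto
    have "pderiv [:-r, 1:] = 1" by (simp add: pderiv_pCons)
    then have pd: "pderiv p = [:-r, 1:] * pderiv q + q"
      unfolding pq by (simp only: pderiv_mult mult_1_right)
    have "poly (pderiv p) r \<noteq> 0" using less.prems(2) r by blast
    then have qr: "poly q r \<noteq> 0" unfolding pd by simp
    have "poly (pderiv q) x \<noteq> 0" if qx: "poly q x = 0" for x
    proof -
      have "poly p x = 0" unfolding pq using qx by simp
      then have "poly (pderiv p) x \<noteq> 0" using less.prems(2) by blast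
      then show ?thesis unfolding pd using qx by simp
    qed
    then have IH: "card {x. poly q x = 0} = degree q" using less.hyps[of q] deg q0 by simp
    have "{x. poly p x = 0} = insert r {x. poly q x = 0}" unfolding pq by auto
    with qr q0 have "card {x. poly p x = 0} = Suc (card {x. poly q x = 0})"
      by (simp add: poly_roots_finite)
    with IH deg show ?thesis by simp
  qed
qed

lemma alg_closed_field_infinite: "infinite (UNIV :: 'a::alg_closed_field set)"
proof
  assume fin: "finite (UNIV :: 'a set)"
  define q :: "'a poly" where "q = (\<Prod>a\<in>UNIV. [:-a, 1:])"
  have "degree q = card (UNIV :: 'a set)"
    unfolding q_def by (subst degree_prod_eq_sum_degree) (auto simp: fin)
  then have "degree (q + 1) > 0" using fin by (simp add: degree_add_eq_left card_gt_0_iff)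
  then obtain r where "poly (q + 1) r = 0" using alg_closed_imp_poly_has_root by blast
  moreover have "poly q r = 0" unfolding q_def poly_prod using fin by (intro prod_zero) auto
  ultimately show False by simp
qed

section \<open>Solving \<open>w\<^sup>[2] = N w\<close> by elimination\<close>

locale square_system =
  fixes n11 n12 n13 n21 n22 n23 n31 n32 n33 :: "'a::field"
begin

abbreviation matrix :: "'a mat3" where
  "matrix \<equiv> ((n11,n12,n13),(n21,n22,n23),(n31,n32,n33))"

definition cx :: 'a where "cx = n13*n21 + n23*n11"

definition cy :: 'a where "cy = n13*n22 + n23*n12"

definition dy :: 'a where "dy = n12\<^sup>2*cy + n13^3*n32 + n13\<^sup>2*n33*n12"

definition q1 :: 'a where "q1 = n12\<^sup>2*cx + n13^3*n31 + n13\<^sup>2*n33*n11"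

definition q2 :: 'a where "q2 = n13*n11\<^sup>2 + n12\<^sup>2*n23 + n13\<^sup>2*n33"

definition Q :: "'a \<Rightarrow> 'a" where "Q x = n13*x^4 + q2*x\<^sup>2 + q1*x"

text \<open>The eliminant is an additive polynomial, so its derivative is the constant
  \<open>dy * (cy*q1 + dy*cx)\<close>; when this is nonzero the eliminant is separable.\<close>

definition eliminant :: "'a poly" where
  "eliminant = [:0, dy*(cy*q1 + dy*cx), n13*q1\<^sup>2 + cy*dy*q2 + dy\<^sup>2*n23, 0,
                 n13*q2\<^sup>2 + cy*dy*n13, 0, 0, 0, n13^3:]"

definition nondeg :: 'a where "nondeg = n13 * dy * (cy*q1 + dy*cx)"

lemma degree_eliminant: "n13 \<noteq> 0 \<Longrightarrow> degree eliminant = 8"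
  by (simp add: eliminant_def numeral_eq_Suc)

lemma pderiv_eliminant:
  "CHAR('a) = 2 \<Longrightarrow> pderiv eliminant = [:dy*(cy*q1 + dy*cx):]"
  by (simp add: eliminant_def pderiv_pCons char2_simps)

lemma solution_iff:
  assumes char: "CHAR('a) = 2" and n13: "n13 \<noteq> 0" and dy: "dy \<noteq> 0"
  shows "sq3 (x,y,z) = mat_vec3 matrix (x,y,z) \<longleftrightarrow>
           poly eliminant x = 0 \<and> y = Q x / dy \<and> z = (x\<^sup>2 + n11*x + n12*y) / n13"
proof -
  define h1 where "h1 = x\<^sup>2 + n11*x + n12*y + n13*z"
  define h2 where "h2 = y\<^sup>2 + n21*x + n22*y + n23*z"
  define h3 where "h3 = z\<^sup>2 + n31*x + n32*y + n33*z"
  define p2 where "p2 = n13*y\<^sup>2 + n23*x\<^sup>2 + cx*x + cy*y"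
  define p3 where "p3 = dy*y + Q x"
  note c2 = char2_simps[OF char] char2_add_eq_0_iff[OF char]
  have system: "sq3 (x,y,z) = mat_vec3 matrix (x,y,z) \<longleftrightarrow>
                  h1 = 0 \<and> h2 = 0 \<and> h3 = 0"
    unfolding h1_def h2_def h3_def sq3_def mat_vec3_def by (simp add: c2 add.assoc)
  \<comment> \<open>Elimination of \<open>z\<close>, then of \<open>y\<^sup>2\<close>, then of \<open>y\<close>:\<close>
  have p2: "p2 = n13*h2 + n23*h1"
    unfolding p2_def h1_def h2_def cx_def cy_def by (simp add: algebra_simps power2_eq_square c2)
  have p3: "p3 = n13*(n13\<^sup>2*h3 + n13*n33*h1 + h1\<^sup>2) + n12\<^sup>2*p2"
    unfolding p3_def p2_def h1_def h3_def Q_def q1_def q2_def dy_def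
    by (simp add: algebra_simps power2_eq_square power3_eq_cube power4_eq_xxxx c2)
  have L: "poly eliminant x = dy\<^sup>2*p2 + (n13*p3 + cy*dy)*p3"
    unfolding eliminant_def p2_def p3_def Q_def
    by (simp add: algebra_simps power2_eq_square power3_eq_cube power4_eq_xxxx c2)
  have y_iff: "p3 = 0 \<longleftrightarrow> y = Q x / dy" using dy by (auto simp: p3_def c2 field_simps)
  have z_iff: "h1 = 0 \<longleftrightarrow> z = (x\<^sup>2 + n11*x + n12*y) / n13"
    using n13 by (auto simp: h1_def c2 field_simps)
  show ?thesis
  proof
    assume "sq3 (x,y,z) = mat_vec3 matrix (x,y,z)"
    with system have "h1 = 0" "h2 = 0" "h3 = 0" by auto
    with p2 p3 L y_iff z_iff
    show "poly eliminant x = 0 \<and> y = Q x / dy \<and> z = (x\<^sup>2 + n11*x + n12*y) / n13" by simp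
  next
    assume sol: "poly eliminant x = 0 \<and> y = Q x / dy \<and> z = (x\<^sup>2 + n11*x + n12*y) / n13"
    with y_iff z_iff have "p3 = 0" "h1 = 0" by auto
    with sol L dy have "p2 = 0" by simp
    with p2 \<open>h1 = 0\<close> n13 have "h2 = 0" by simp
    with p3 \<open>p2 = 0\<close> \<open>p3 = 0\<close> \<open>h1 = 0\<close> n13 have "h3 = 0" by simp
    with system \<open>h1 = 0\<close> \<open>h2 = 0\<close> show "sq3 (x,y,z) = mat_vec3 matrix (x,y,z)" by simp
  qed
qed

end

definition square_system_nondeg :: "'a::field mat3 \<Rightarrow> 'a" where
  "square_system_nondeg N = (case N of ((n11,n12,n13),(n21,n22,n23),(n31,n32,n33)) \<Rightarrow>
     square_system.nondeg n11 n12 n13 n21 n22 n23 n31 n32 n33)"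

lemma card_square_system_solutions:
  fixes N :: "'a::alg_closed_field mat3"
  assumes char: "CHAR('a) = 2" and nondeg: "square_system_nondeg N \<noteq> 0"
  shows "card {w. sq3 w = mat_vec3 N w} = 8"
proof -
  obtain n11 n12 n13 n21 n22 n23 n31 n32 n33 where N: "N = ((n11,n12,n13),(n21,n22,n23),(n31,n32,n33))"
    by (induct N rule: mat3_induct) auto
  interpret square_system n11 n12 n13 n21 n22 n23 n31 n32 n33 .
  have nz: "n13 \<noteq> 0" "dy \<noteq> 0" "dy * (cy*q1 + dy*cx) \<noteq> 0"
    using nondeg by (auto simp: N square_system_nondeg_def nondeg_def)
  let ?sol = "\<lambda>x. (x, Q x / dy, (x\<^sup>2 + n11*x + n12*(Q x / dy)) / n13)"
  have solutions: "{w. sq3 w = mat_vec3 N w} = ?sol ` {x. poly eliminant x = 0}"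
  proof (intro set_eqI iffI)
    fix w assume "w \<in> {w. sq3 w = mat_vec3 N w}"
    moreover obtain x y z where w: "w = (x,y,z)" by (cases w rule: prod_cases3)
    ultimately have "poly eliminant x = 0" "y = Q x / dy" "z = (x\<^sup>2 + n11*x + n12*y) / n13"
      using solution_iff[OF char nz(1,2)] by (simp_all add: N)
    then show "w \<in> ?sol ` {x. poly eliminant x = 0}" unfolding w by (intro image_eqI[of _ _ x]) simp_all
  next
    fix w assume "w \<in> ?sol ` {x. poly eliminant x = 0}"
    then obtain x y z where "w = (x,y,z)" "poly eliminant x = 0" "y = Q x / dy"
      "z = (x\<^sup>2 + n11*x + n12*y) / n13" by auto
    then show "w \<in> {w. sq3 w = mat_vec3 N w}" using solution_iff[OF char nz(1,2)] by (simp add: N)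
  qed
  have "card (?sol ` {x. poly eliminant x = 0}) = card {x. poly eliminant x = 0}"
    by (rule card_image, rule inj_onI) simp
  also have "\<dots> = degree eliminant"
  proof (rule card_roots_rsquarefree)
    show "eliminant \<noteq> 0" using degree_eliminant[OF nz(1)] by auto
    show "\<forall>x. poly eliminant x = 0 \<longrightarrow> poly (pderiv eliminant) x \<noteq> 0"
      using nz(3) by (simp add: pderiv_eliminant[OF char])
  qed
  finally show ?thesis using solutions degree_eliminant[OF nz(1)] by simp
qed

lemma card_proj_frob_eigencone_eq_7:
  fixes M :: "'a::alg_closed_field mat3"
  assumes char: "CHAR('a) = 2" and d: "mat_det3 M \<noteq> 0"
    and nondeg: "square_system_nondeg (adj3 M) \<noteq> 0"
  shows "finite (proj_point ` frob_eigencone M) \<and> card (proj_point ` frob_eigencone M) = 7"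
proof -
  let ?F = "frob_fixed M - {(0,0,0)}"
  have "inj (smult3 (1 / mat_det3 M))" using d by (auto intro: injI simp: smult3_eq_smult3_iff)
  then have "card (frob_fixed M) = 8"
    using card_square_system_solutions[OF char nondeg]
    by (simp add: frob_fixed_eq_scaled_square_system[OF d] card_image[OF inj_on_subset])
  then have F: "finite ?F" "card ?F = 7"
    by (auto simp: card_Diff_singleton[OF zero_in_frob_fixed] intro: card_ge_0_finite)
  have "proj_point ` frob_eigencone M = proj_point ` ?F"
  proof
    show "proj_point ` frob_eigencone M \<subseteq> proj_point ` ?F"
      using proj_frob_eigencone_subset[of M] by (simp add: frob_kernel_empty[OF d])
    show "proj_point ` ?F \<subseteq> proj_point ` frob_eigencone M"
      by (intro image_mono) (auto simp: frob_eigencone_def frob_fixed_def)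
  qed
  with F show ?thesis by (simp add: card_image[OF inj_on_proj_point_frob_fixed])
qed

section \<open>Quartic forms in characteristic 2\<close>

lemma monomials_2: "monomials 2 = {(0,0,2),(0,1,1),(0,2,0),(1,0,1),(1,1,0),(2,0,0)}"
proof (intro set_eqI iffI)
  fix m assume "m \<in> monomials 2"
  then obtain a b c where m: "m = (a,b,c)" "a + b + c = 2" by (auto simp: monomials_def)
  then have "a = 0 \<or> a = 1 \<or> a = 2" "b = 0 \<or> b = 1 \<or> b = 2" by arith+
  with m show "m \<in> {(0,0,2),(0,1,1),(0,2,0),(1,0,1),(1,1,0),(2,0,0)}" by (elim disjE) auto
qed (auto simp: monomials_def)

lemma monomials_3:
  "monomials 3 = {(0,0,3),(0,1,2),(0,2,1),(0,3,0),(1,0,2),(1,1,1),(1,2,0),(2,0,1),(2,1,0),(3,0,0)}"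
proof (intro set_eqI iffI)
  fix m assume "m \<in> monomials 3"
  then obtain a b c where m: "m = (a,b,c)" "a + b + c = 3" by (auto simp: monomials_def)
  then have "a = 0 \<or> a = 1 \<or> a = 2 \<or> a = 3" "b = 0 \<or> b = 1 \<or> b = 2 \<or> b = 3" by arith+
  with m show "m \<in> {(0,0,3),(0,1,2),(0,2,1),(0,3,0),(1,0,2),(1,1,1),(1,2,0),(2,0,1),(2,1,0),(3,0,0)}"
    by (elim disjE) auto
qed (auto simp: monomials_def)

lemma less_3_nat_cases: "(\<forall>i<3::nat. P i) \<longleftrightarrow> P 0 \<and> P 1 \<and> P 2"
proof -
  have "i < 3 \<longleftrightarrow> i = 0 \<or> i = 1 \<or> i = 2" for i :: nat by arith
  then show ?thesis by auto
qed

lemma coord_all_zero_iff: "(\<forall>i<3. coord i v = (0::'a::zero)) \<longleftrightarrow> v = (0,0,0)"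
  by (induct v rule: prod_induct3) (simp add: less_3_nat_cases coord_def)

text \<open>The coefficients of the nine quartic monomials with an odd exponent; the other six
  monomials are squares and do not contribute to the gradient in characteristic 2.\<close>

definition quartic_matrix :: "'a coeffs \<Rightarrow> 'a mat3" where
  "quartic_matrix B = ((B (2,1,1), B (0,3,1), B (0,1,3)),
                       (B (3,0,1), B (1,2,1), B (1,0,3)),
                       (B (3,1,0), B (1,3,0), B (1,1,2)))"

lemma eval_pderiv3_char2:
  fixes B :: "'a::comm_ring_1 coeffs"
  assumes char: "CHAR('a) = 2" and i: "i < 3"
  shows "eval_form 3 (pderiv3 i B) v = coord i (cross3 v (frob3 (quartic_matrix B) v))"
proof -
  obtain x y z where v: "v = (x,y,z)" by (cases v rule: prod_cases3)
  have "i = 0 \<or> i = 1 \<or> i = 2" using i by arith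
  then show ?thesis
    unfolding v
    by (elim disjE)
       (simp_all add: eval_form_def monomials_3 pderiv3_def coord_def frob3_def vec3_defs
          quartic_matrix_def char2_simps[OF char] algebra_simps power2_eq_square power3_eq_cube)
qed

text \<open>Since \<open>d(x\<^sup>2) = 2x dx = 0\<close> in characteristic 2, differentiating the gradient formula
  only affects the left factor of the cross product.\<close>

lemma hessian_pderiv3_char2:
  fixes B :: "'a::comm_ring_1 coeffs"
  assumes char: "CHAR('a) = 2" and i: "i < 3"
  shows "(\<Sum>j<3. eval_form 2 (pderiv3 j (pderiv3 i B)) v * coord j w)
           = coord i (cross3 w (frob3 (quartic_matrix B) v))"
proof -
  obtain x y z where v: "v = (x,y,z)" by (cases v rule: prod_cases3)
  obtain u1 u2 u3 where w: "w = (u1,u2,u3)" by (cases w rule: prod_cases3)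
  have "{..<3::nat} = {0,1,2}" by auto
  moreover have "i = 0 \<or> i = 1 \<or> i = 2" using i by arith
  ultimately show ?thesis
    unfolding v w
    by (elim disjE)
       (simp_all add: eval_form_def monomials_2 pderiv3_def coord_def frob3_def vec3_defs
          quartic_matrix_def char2_simps[OF char] algebra_simps power2_eq_square)
qed

lemma crit_cone_eq_frob_eigencone:
  fixes B :: "'a::field coeffs"
  assumes char: "CHAR('a) = 2"
  shows "crit_cone B = frob_eigencone (quartic_matrix B)"
proof -
  have "(\<forall>i<3. eval_form 3 (pderiv3 i B) v = 0) \<longleftrightarrow>
          cross3 v (frob3 (quartic_matrix B) v) = (0,0,0)" for v
    using coord_all_zero_iff[of "cross3 v (frob3 (quartic_matrix B) v)"]
    by (simp add: eval_pderiv3_char2[OF char])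
  then show ?thesis unfolding crit_cone_def frob_eigencone_def by simp
qed

lemma reduced_crit_point_iff:
  fixes B :: "'a::field coeffs"
  assumes char: "CHAR('a) = 2"
  shows "reduced_crit_point B v \<longleftrightarrow>
           {w. cross3 w (frob3 (quartic_matrix B) v) = (0,0,0)} = {smult3 t v | t. True}"
proof -
  have "(\<forall>i<3. (\<Sum>j<3. eval_form 2 (pderiv3 j (pderiv3 i B)) v * coord j w) = 0) \<longleftrightarrow>
          cross3 w (frob3 (quartic_matrix B) v) = (0,0,0)" for w
    using coord_all_zero_iff[of "cross3 w (frob3 (quartic_matrix B) v)"]
    by (simp add: hessian_pderiv3_char2[OF char])
  then show ?thesis unfolding reduced_crit_point_def by simp
qed

lemma crit_locus_eq_proj_frob_eigencone:
  fixes B :: "'a::field coeffs"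
  assumes "CHAR('a) = 2"
  shows "crit_locus B = proj_point ` frob_eigencone (quartic_matrix B)"
  by (simp add: crit_locus_def crit_cone_eq_frob_eigencone[OF assms])

lemma card_crit_locus_le_7:
  fixes B :: "'a::alg_closed_field coeffs"
  assumes char: "CHAR('a) = 2" and "finite (crit_locus B)"
  shows "card (crit_locus B) \<le> 7"
  using assms card_proj_frob_eigencone_le_7[OF char alg_closed_field_infinite]
  by (simp add: crit_locus_eq_proj_frob_eigencone)

lemma quartic_poly_funs_diff:
  assumes "P \<in> quartic_poly_funs" "Q \<in> quartic_poly_funs"
  shows "(\<lambda>B. P B - Q B) \<in> quartic_poly_funs"
proof -
  have "(\<lambda>B. P B + (-1) * Q B) \<in> quartic_poly_funs"
    by (intro quartic_poly_funs.add quartic_poly_funs.mult quartic_poly_funs.const assms)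
  then show ?thesis by simp
qed

lemma quartic_poly_funs_power:
  "P \<in> quartic_poly_funs \<Longrightarrow> (\<lambda>B. P B ^ n) \<in> quartic_poly_funs"
  by (induction n) (auto intro: quartic_poly_funs.const quartic_poly_funs.mult)

definition quartic_genericity :: "'a::field coeffs \<Rightarrow> 'a" where
  "quartic_genericity B =
     mat_det3 (quartic_matrix B) * square_system_nondeg (adj3 (quartic_matrix B))"

lemma quartic_genericity_poly_fun: "quartic_genericity \<in> quartic_poly_funs"
  unfolding quartic_genericity_def square_system_nondeg_def quartic_matrix_def mat_det3_def adj3_def
    det3_def cross3_def square_system.nondeg_def square_system.dy_def
    square_system.cy_def square_system.cx_def square_system.q1_def
  by (simp only: prod.case)
     (intro quartic_poly_funs.mult quartic_poly_funs.add quartic_poly_funs_diff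
        quartic_poly_funs_power quartic_poly_funs.var; simp add: monomials_def)

lemma generic_crit_locus:
  fixes B :: "'a::alg_closed_field coeffs"
  assumes char: "CHAR('a) = 2" and generic: "quartic_genericity B \<noteq> 0"
  shows "finite (crit_locus B) \<and> card (crit_locus B) = 7 \<and> (\<forall>v\<in>crit_cone B. reduced_crit_point B v)"
proof -
  have d: "mat_det3 (quartic_matrix B) \<noteq> 0"
    and nondeg: "square_system_nondeg (adj3 (quartic_matrix B)) \<noteq> 0"
    using generic by (auto simp: quartic_genericity_def)
  then show ?thesis
    using card_proj_frob_eigencone_eq_7[OF char d nondeg] frob_eigencone_tangent_space[OF d]
    by (simp add: crit_locus_eq_proj_frob_eigencone[OF char] crit_cone_eq_frob_eigencone[OF char]
        reduced_crit_point_iff[OF char])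
qed

definition klein_quartic :: "'a::comm_ring_1 coeffs" where
  "klein_quartic m = (if m \<in> {(3,1,0), (0,3,1), (1,0,3)} then 1 else 0)"

lemma homog_form_klein_quartic: "homog_form 4 klein_quartic"
  by (auto simp: homog_form_def klein_quartic_def monomials_def)

lemma quartic_genericity_klein_quartic: "quartic_genericity (klein_quartic :: 'a::field coeffs) = 1"
  by (simp add: quartic_genericity_def square_system_nondeg_def quartic_matrix_def klein_quartic_def
      mat_det3_def adj3_def det3_def cross3_def square_system.nondeg_def
      square_system.dy_def square_system.cy_def square_system.cx_def
      square_system.q1_def)

theorem proposition2p3:
  assumes "CHAR('a::alg_closed_field) = 2"
  shows "(\<forall>B :: 'a coeffs. homog_form 4 B \<longrightarrow> finite (crit_locus B) \<longrightarrow>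
            card (crit_locus B) \<le> 7)
       \<and> (\<exists>P \<in> (quartic_poly_funs :: ('a coeffs \<Rightarrow> 'a) set).
            (\<exists>B. homog_form 4 B \<and> P B \<noteq> 0) \<and>
            (\<forall>B. homog_form 4 B \<and> P B \<noteq> 0 \<longrightarrow>
               finite (crit_locus B) \<and> card (crit_locus B) = 7 \<and>
               (\<forall>v\<in>crit_cone B. reduced_crit_point B v)))"
proof (intro conjI bexI[of _ quartic_genericity] quartic_genericity_poly_fun)
  show "\<forall>B :: 'a coeffs. homog_form 4 B \<longrightarrow> finite (crit_locus B) \<longrightarrow> card (crit_locus B) \<le> 7"
    using card_crit_locus_le_7[OF assms] by blast
  have "quartic_genericity (klein_quartic :: 'a coeffs) \<noteq> 0"
    by (simp add: quartic_genericity_klein_quartic)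
  then show "\<exists>B :: 'a coeffs. homog_form 4 B \<and> quartic_genericity B \<noteq> 0"
    using homog_form_klein_quartic by blast
  show "\<forall>B :: 'a coeffs. homog_form 4 B \<and> quartic_genericity B \<noteq> 0 \<longrightarrow>
          finite (crit_locus B) \<and> card (crit_locus B) = 7 \<and>
          (\<forall>v\<in>crit_cone B. reduced_crit_point B v)"
    using generic_crit_locus[OF assms] by blast
qed

end
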